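(* Let $B$ be an aperiodic Bratteli diagram of finite rank. Suppose there exist $\varepsilon>0$, a strictly increasing sequence of levels $(n_k)$ and vertices $w_k\in V_{n_k}$ such that $m'^{(k)}_{v,w_k}\ge\varepsilon$ for all $k\in\mathbb N$ and all $v\in V_{n_{k+1}}$. Then $\mu(\mathcal O_B(1))=1$.
   Context: A Bratteli diagram $B$ has levels $V_n$ ($V_0=\{v_0\}$) and edge sets $E_n$ from $V_{n-1}$ to $V_n$; incidence matrix $F_n=(f^{(n)}_{v,w})_{v\in V_{n+1},w\in V_n}$ counts edges from $w$ to $v$; aperiodic means every tail-equivalence class of infinite paths is infinite; finite rank means $\sup_n|V_n|<\infty$. Let $M_n=(m^{(n)}_{v,w})$ be the row-stochastic matrix $m^{(n)}_{v,w}=f^{(n)}_{v,w}/\sum_{w'}f^{(n)}_{v,w'}$ (the proportion of edges with range $v\in V_{n+1}$ having source $w\in V_n$), and for a sequence $(n_k)$ let $M'_k=(m'^{(k)}_{v,w})_{v\in V_{n_{k+1}},w\in V_{n_k}}$ be the product $M_{n_{k+1}-1}M_{n_{k+1}-2}\cdots M_{n_k}$. An ordering is a linear order on each $r^{-1}(v)$; $\mathcal O_B$ carries the product measure $\mu$ of uniform measures on the sets of linear orders of the $r^{-1}(v)$. $\mathcal O_B(1)$ is the set of orderings with exactly one maximal infinite path. *)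

theory Defs
  imports "HOL-Probability.Probability"
begin

text \<open>Concrete encoding of a Bratteli diagram B.
  d n = |V_n|, with V_n = {0..<d n};
  f n v w = f^(n)_{v,w} = number of edges from w in V_n to v in V_{n+1}.
  An edge from level n to level n+1 (an element of E_{n+1}) is a triple (w, v, i)
  with w < d n, v < d (Suc n), i < f n v w; source w, range v.\<close>

type_synonym edge = "nat \<times> nat \<times> nat"

definition esrc :: "edge \<Rightarrow> nat" where "esrc e = fst e"
definition erng :: "edge \<Rightarrow> nat" where "erng e = fst (snd e)"

definition is_edge :: "(nat \<Rightarrow> nat) \<Rightarrow> (nat \<Rightarrow> nat \<Rightarrow> nat \<Rightarrow> nat) \<Rightarrow> nat \<Rightarrow> edge \<Rightarrow> bool" where
  "is_edge d f n e \<longleftrightarrow> fst e < d n \<and> fst (snd e) < d (Suc n) \<and> snd (snd e) < f n (fst (snd e)) (fst e)"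

definition bratteli :: "(nat \<Rightarrow> nat) \<Rightarrow> (nat \<Rightarrow> nat \<Rightarrow> nat \<Rightarrow> nat) \<Rightarrow> bool" where
  "bratteli d f \<longleftrightarrow> d 0 = 1 \<and> (\<forall>n. d n \<ge> 1)
     \<and> (\<forall>n v. v < d (Suc n) \<longrightarrow> (\<exists>w < d n. f n v w > 0))
     \<and> (\<forall>n w. w < d n \<longrightarrow> (\<exists>v < d (Suc n). f n v w > 0))"

definition is_path :: "(nat \<Rightarrow> nat) \<Rightarrow> (nat \<Rightarrow> nat \<Rightarrow> nat \<Rightarrow> nat) \<Rightarrow> (nat \<Rightarrow> edge) \<Rightarrow> bool" where
  "is_path d f x \<longleftrightarrow> (\<forall>n. is_edge d f n (x n)) \<and> esrc (x 0) = 0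
     \<and> (\<forall>n. erng (x n) = esrc (x (Suc n)))"

definition tail_equiv :: "(nat \<Rightarrow> edge) \<Rightarrow> (nat \<Rightarrow> edge) \<Rightarrow> bool" where
  "tail_equiv x y \<longleftrightarrow> (\<exists>N. \<forall>n\<ge>N. x n = y n)"

definition aperiodic :: "(nat \<Rightarrow> nat) \<Rightarrow> (nat \<Rightarrow> nat \<Rightarrow> nat \<Rightarrow> nat) \<Rightarrow> bool" where
  "aperiodic d f \<longleftrightarrow> (\<forall>x. is_path d f x \<longrightarrow> infinite {y. is_path d f y \<and> tail_equiv x y})"

definition finite_rank :: "(nat \<Rightarrow> nat) \<Rightarrow> bool" where
  "finite_rank d \<longleftrightarrow> (\<exists>K. \<forall>n. d n \<le> K)"

text \<open>Row-stochastic matrix M_n (rows v in V_{n+1}, columns w in V_n).\<close>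
definition stoch :: "(nat \<Rightarrow> nat) \<Rightarrow> (nat \<Rightarrow> nat \<Rightarrow> nat \<Rightarrow> nat) \<Rightarrow> nat \<Rightarrow> nat \<Rightarrow> nat \<Rightarrow> real" where
  "stoch d f n v w = real (f n v w) / (\<Sum>w'<d n. real (f n v w'))"

text \<open>mprod d f a b = M_{b-1} M_{b-2} ... M_a (rows in V_b, columns in V_a), identity if a = b.\<close>
fun mprod :: "(nat \<Rightarrow> nat) \<Rightarrow> (nat \<Rightarrow> nat \<Rightarrow> nat \<Rightarrow> nat) \<Rightarrow> nat \<Rightarrow> nat \<Rightarrow> nat \<Rightarrow> nat \<Rightarrow> real" where
  "mprod d f a 0 v w = (if v = w then 1 else 0)"
| "mprod d f a (Suc b) v w =
     (if Suc b \<le> a then (if v = w then 1 else 0)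
      else (\<Sum>u<d b. stoch d f b v u * mprod d f a b u w))"

text \<open>Orderings: for each n and v in V_{n+1}, a linear order on r^{-1}(v), encoded as a
  duplicate-free list enumerating r^{-1}(v) in increasing order.\<close>
definition orders :: "(nat \<Rightarrow> nat) \<Rightarrow> (nat \<Rightarrow> nat \<Rightarrow> nat \<Rightarrow> nat) \<Rightarrow> nat \<Rightarrow> nat \<Rightarrow> edge list set" where
  "orders d f n v = {xs. distinct xs \<and> set xs = {e. is_edge d f n e \<and> erng e = v}}"

definition ord_index :: "(nat \<Rightarrow> nat) \<Rightarrow> (nat \<times> nat) set" where
  "ord_index d = {(n, v). v < d (Suc n)}"

definition ord_measure :: "(nat \<Rightarrow> nat) \<Rightarrow> (nat \<Rightarrow> nat \<Rightarrow> nat \<Rightarrow> nat) \<Rightarrow> ((nat \<times> nat) \<Rightarrow> edge list) measure" where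
  "ord_measure d f = PiM (ord_index d) (\<lambda>(n, v). measure_pmf (pmf_of_set (orders d f n v)))"

definition is_max_path :: "(nat \<Rightarrow> nat) \<Rightarrow> (nat \<Rightarrow> nat \<Rightarrow> nat \<Rightarrow> nat) \<Rightarrow> ((nat \<times> nat) \<Rightarrow> edge list) \<Rightarrow> (nat \<Rightarrow> edge) \<Rightarrow> bool" where
  "is_max_path d f om x \<longleftrightarrow> is_path d f x \<and> (\<forall>n. x n = last (om (n, erng (x n))))"

definition O_B1 :: "(nat \<Rightarrow> nat) \<Rightarrow> (nat \<Rightarrow> nat \<Rightarrow> nat \<Rightarrow> nat) \<Rightarrow> ((nat \<times> nat) \<Rightarrow> edge list) set" where
  "O_B1 d f = {om \<in> space (ord_measure d f). \<exists>!x. is_max_path d f om x}"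

end

theory Submission
  imports Defs "HOL-Combinatorics.Multiset_Permutations"
begin

(* For an ordering om, following at each vertex v of V_(n+1) the maximal edge of
   r^-1(v) down to its source gives a "maximal walk"; maximal paths are exactly the infinite
   chains of such steps.  Let C_k be the event that the maximal walk from every vertex of
   V_(n_(k+1)) down to level n_k ends at w_k.
   (1) Since the maximal edges at different vertices are independent and the source of the
       maximal edge into v has law M_n(v,-), an induction over levels gives
       P(C_k) >= prod_v m'(v,w_k) >= eps^K, where K bounds the ranks |V_n|.
   (2) The events C_k depend on disjoint blocks of levels, so they are independent and almost
       surely infinitely many of them occur.
   (3) If C_k occurs, every maximal path passes through w_k at level n_k; so infinitely many
       C_k force all maximal paths to agree, and a Koenig argument yields existence. *)

lemma singleton_eq_PiE:
  assumes "g \<in> PiE J (\<lambda>_. UNIV)"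
  shows "{g} = PiE J (\<lambda>j. {g j})"
proof
  show "{g} \<subseteq> PiE J (\<lambda>j. {g j})" using assms by (auto simp: PiE_iff)
  show "PiE J (\<lambda>j. {g j}) \<subseteq> {g}"
  proof
    fix x assume x: "x \<in> PiE J (\<lambda>j. {g j})"
    have "x \<in> PiE J (\<lambda>_. UNIV)" using x by (auto simp: PiE_iff)
    hence "x = g" by (rule PiE_ext[OF _ assms]) (use x in auto)
    thus "x \<in> {g}" by simp
  qed
qed

text \<open>Over a finite index set and a countable value type, every set of (extensional) functions
  is countable, hence measurable in the product of discrete measures.\<close>
lemma countable_in_sets_PiM:
  fixes X :: "('i \<Rightarrow> 'a::countable) set" and Q :: "'i \<Rightarrow> 'a pmf"
  assumes "finite J" "X \<subseteq> PiE J (\<lambda>_. UNIV)"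
  shows "countable X" and "X \<in> sets (PiM J (\<lambda>i. measure_pmf (Q i)))"
proof -
  have "countable (PiE J (\<lambda>_. UNIV :: 'a set))" by (rule countable_PiE) (use assms in auto)
  thus cX: "countable X" using assms(2) countable_subset by blast
  show "X \<in> sets (PiM J (\<lambda>i. measure_pmf (Q i)))"
  proof (rule sets.countable[OF _ cX])
    fix g assume "g \<in> X"
    hence "{g} = PiE J (\<lambda>j. {g j})" using assms(2) by (intro singleton_eq_PiE) auto
    thus "{g} \<in> sets (PiM J (\<lambda>i. measure_pmf (Q i)))"
      using assms(1) by (simp add: sets_PiM_I_finite)
  qed
qed

lemma emeasure_prod_emb_Pi_pmf:
  fixes X :: "('i \<Rightarrow> 'a::countable) set" and Q :: "'i \<Rightarrow> 'a pmf"
  assumes J: "finite J" "J \<subseteq> I" and X: "X \<subseteq> PiE J (\<lambda>_. UNIV)"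
  shows "prod_emb I (\<lambda>i. measure_pmf (Q i)) J X \<in> sets (PiM I (\<lambda>i. measure_pmf (Q i)))"
    and "emeasure (PiM I (\<lambda>i. measure_pmf (Q i))) (prod_emb I (\<lambda>i. measure_pmf (Q i)) J X)
         = emeasure (measure_pmf (Pi_pmf J undefined Q)) X"
proof -
  interpret product_prob_space "\<lambda>i. measure_pmf (Q i)" I
    by (intro product_prob_spaceI) (simp add: measure_pmf.prob_space_axioms)
  note X_countable = countable_in_sets_PiM(1)[OF J(1) X]
  note X_sets = countable_in_sets_PiM(2)[OF J(1) X, where Q=Q]
  show "prod_emb I (\<lambda>i. measure_pmf (Q i)) J X \<in> sets (PiM I (\<lambda>i. measure_pmf (Q i)))"
    by (rule measurable_prod_emb[OF J(2) X_sets])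
  have point: "emeasure (PiM J (\<lambda>i. measure_pmf (Q i))) {g}
      = emeasure (measure_pmf (Pi_pmf J undefined Q)) {g}" if "g \<in> X" for g
  proof -
    have gE: "g \<in> PiE J (\<lambda>_. UNIV)" using that X by auto
    have "emeasure (PiM J (\<lambda>i. measure_pmf (Q i))) {g} = (\<Prod>j\<in>J. emeasure (measure_pmf (Q j)) {g j})"
      unfolding singleton_eq_PiE[OF gE] by (rule emeasure_PiM) (use J in auto)
    also have "\<dots> = ennreal (\<Prod>j\<in>J. pmf (Q j) (g j))"
      by (simp add: emeasure_pmf_single prod_ennreal)
    also have "\<dots> = ennreal (pmf (Pi_pmf J undefined Q) g)"
      using gE J by (subst pmf_Pi') (auto simp: PiE_iff extensional_def)
    finally show ?thesis by (simp add: emeasure_pmf_single)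
  qed
  have "emeasure (PiM I (\<lambda>i. measure_pmf (Q i))) (prod_emb I (\<lambda>i. measure_pmf (Q i)) J X)
        = emeasure (PiM J (\<lambda>i. measure_pmf (Q i))) X"
    using emeasure_PiM_emb'[OF J(2) J(1) X_sets] by simp
  also have "\<dots> = (\<integral>\<^sup>+g. emeasure (PiM J (\<lambda>i. measure_pmf (Q i))) {g} \<partial>count_space X)"
    by (rule emeasure_countable_singleton[OF _ X_countable])
       (intro countable_in_sets_PiM(2)[OF J(1)], use X in auto)
  also have "\<dots> = (\<integral>\<^sup>+g. emeasure (measure_pmf (Pi_pmf J undefined Q)) {g} \<partial>count_space X)"
    by (rule nn_integral_cong) (simp add: point)
  also have "\<dots> = emeasure (measure_pmf (Pi_pmf J undefined Q)) X"
    by (rule emeasure_countable_singleton[symmetric, OF _ X_countable]) simp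
  finally show "emeasure (PiM I (\<lambda>i. measure_pmf (Q i))) (prod_emb I (\<lambda>i. measure_pmf (Q i)) J X)
         = emeasure (measure_pmf (Pi_pmf J undefined Q)) X" .
qed

lemma finite_dim_event:
  fixes P :: "('i \<Rightarrow> 'a::countable) \<Rightarrow> bool" and Q :: "'i \<Rightarrow> 'a pmf"
  assumes J: "finite J" "J \<subseteq> I"
    and dep: "\<And>om. om \<in> PiE I (\<lambda>_. UNIV) \<Longrightarrow> P om = P (restrict om J)"
  shows "{om \<in> space (PiM I (\<lambda>i. measure_pmf (Q i))). P om} \<in> sets (PiM I (\<lambda>i. measure_pmf (Q i)))"
    and "emeasure (PiM I (\<lambda>i. measure_pmf (Q i))) {om \<in> space (PiM I (\<lambda>i. measure_pmf (Q i))). P om}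
         = emeasure (measure_pmf (Pi_pmf J undefined Q)) {g. P g}"
proof -
  define X where "X = {g \<in> PiE J (\<lambda>_. UNIV). P g}"
  have XS: "X \<subseteq> PiE J (\<lambda>_. UNIV)" unfolding X_def by blast
  have eq: "{om \<in> space (PiM I (\<lambda>i. measure_pmf (Q i))). P om} = prod_emb I (\<lambda>i. measure_pmf (Q i)) J X"
  proof (rule set_eqI)
    fix om
    show "om \<in> {om \<in> space (PiM I (\<lambda>i. measure_pmf (Q i))). P om} \<longleftrightarrow> om \<in> prod_emb I (\<lambda>i. measure_pmf (Q i)) J X"
    proof (cases "om \<in> PiE I (\<lambda>_. UNIV)")
      case True
      thus ?thesis using dep[OF True] unfolding prod_emb_def X_def by (simp add: space_PiM)
    qed (simp add: prod_emb_def space_PiM)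
  qed
  show "{om \<in> space (PiM I (\<lambda>i. measure_pmf (Q i))). P om} \<in> sets (PiM I (\<lambda>i. measure_pmf (Q i)))"
    unfolding eq by (rule emeasure_prod_emb_Pi_pmf(1)[OF J XS])
  have "emeasure (measure_pmf (Pi_pmf J undefined Q)) X = emeasure (measure_pmf (Pi_pmf J undefined Q)) {g. P g}"
  proof (rule emeasure_eq_AE)
    show "AE g in measure_pmf (Pi_pmf J undefined Q). (g \<in> X) = (g \<in> {g. P g})"
    proof (rule AE_pmfI)
      fix g assume "g \<in> set_pmf (Pi_pmf J undefined Q)"
      hence "g \<in> PiE J (\<lambda>_. UNIV)"
        using set_Pi_pmf_subset[OF J(1), of undefined Q] by (auto simp: PiE_iff extensional_def)
      thus "(g \<in> X) = (g \<in> {g. P g})" unfolding X_def by simp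
    qed
  qed simp_all
  thus "emeasure (PiM I (\<lambda>i. measure_pmf (Q i))) {om \<in> space (PiM I (\<lambda>i. measure_pmf (Q i))). P om}
         = emeasure (measure_pmf (Pi_pmf J undefined Q)) {g. P g}"
    unfolding eq using emeasure_prod_emb_Pi_pmf(2)[OF J XS] by simp
qed

lemma measure_pair_pmf_Times:
  "measure_pmf.prob (pair_pmf M N) (X \<times> Y) = measure_pmf.prob M X * measure_pmf.prob N Y"
proof -
  have "measure_pmf.prob (pair_pmf M N) (X \<times> Y)
      = measure_pmf.prob (pair_pmf M N) ((X \<inter> set_pmf M) \<times> (Y \<inter> set_pmf N))"
    by (intro measure_eq_AE AE_pmfI) auto
  also have "\<dots> = measure_pmf.prob M (X \<inter> set_pmf M) * measure_pmf.prob N (Y \<inter> set_pmf N)"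
    by (rule measure_pmf_prob_product) (simp_all add: countable_Int2 countable_set_pmf)
  finally show ?thesis by (simp add: measure_Int_set_pmf)
qed

lemma Pi_pmf_indep:
  assumes fin: "finite A" "finite B" and disj: "A \<inter> B = {}"
    and P: "\<And>h h'. (\<And>x. x \<notin> B \<Longrightarrow> h x = h' x) \<Longrightarrow> P h = P h'"
    and R: "\<And>h h'. (\<And>x. x \<notin> A \<Longrightarrow> h x = h' x) \<Longrightarrow> R h = R h'"
  shows "measure_pmf.prob (Pi_pmf (A \<union> B) dflt Q) {h. P h \<and> R h}
       = measure_pmf.prob (Pi_pmf A dflt Q) {h. P h} * measure_pmf.prob (Pi_pmf B dflt Q) {h. R h}"
proof -
  let ?merge = "\<lambda>(g, g') x. if x \<in> A then g x else g' x"
  let ?pair = "pair_pmf (Pi_pmf A dflt Q) (Pi_pmf B dflt Q)"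
  have "measure_pmf.prob (Pi_pmf (A \<union> B) dflt Q) {h. P h \<and> R h}
      = measure_pmf.prob ?pair (?merge -` {h. P h \<and> R h})"
    by (simp add: Pi_pmf_union[OF fin disj])
  also have "\<dots> = measure_pmf.prob ?pair ({h. P h} \<times> {h. R h})"
  proof (intro measure_eq_AE AE_pmfI)
    fix gg assume "gg \<in> set_pmf ?pair"
    then obtain g g' where gg: "gg = (g, g')" and g': "\<And>x. x \<notin> B \<Longrightarrow> g' x = dflt"
      and g: "\<And>x. x \<notin> A \<Longrightarrow> g x = dflt"
      using set_Pi_pmf_subset[OF fin(1), of dflt Q] set_Pi_pmf_subset[OF fin(2), of dflt Q]
      by (cases gg) auto
    have "P (?merge (g, g')) = P g" by (rule P) (use g g' in auto)
    moreover have "R (?merge (g, g')) = R g'" by (rule R) auto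
    ultimately show "(gg \<in> ?merge -` {h. P h \<and> R h}) = (gg \<in> {h. P h} \<times> {h. R h})"
      using gg by simp
  qed simp_all
  also have "\<dots> = measure_pmf.prob (Pi_pmf A dflt Q) {h. P h} * measure_pmf.prob (Pi_pmf B dflt Q) {h. R h}"
    by (rule measure_pair_pmf_Times)
  finally show ?thesis .
qed


definition ord_pmf :: "(nat \<Rightarrow> nat) \<Rightarrow> (nat \<Rightarrow> nat \<Rightarrow> nat \<Rightarrow> nat) \<Rightarrow> nat \<times> nat \<Rightarrow> edge list pmf" where
  "ord_pmf d f i = pmf_of_set (orders d f (fst i) (snd i))"

lemma ord_measure_eq: "ord_measure d f = PiM (ord_index d) (\<lambda>i. measure_pmf (ord_pmf d f i))"
  unfolding ord_measure_def ord_pmf_def by (simp add: case_prod_beta')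

lemma prob_space_ord_measure: "prob_space (ord_measure d f)"
  unfolding ord_measure_eq by (intro prob_space_PiM) (simp add: measure_pmf.prob_space_axioms)

definition inedges :: "(nat \<Rightarrow> nat) \<Rightarrow> (nat \<Rightarrow> nat \<Rightarrow> nat \<Rightarrow> nat) \<Rightarrow> nat \<Rightarrow> nat \<Rightarrow> edge set" where
  "inedges d f n v = {e. is_edge d f n e \<and> erng e = v}"

lemma inedges_eq: "v < d (Suc n) \<Longrightarrow> inedges d f n v = (\<lambda>(w,i). (w,v,i)) ` (SIGMA w:{..<d n}. {..<f n v w})"
  unfolding inedges_def is_edge_def erng_def by (auto simp: image_iff)

lemma finite_inedges: "v < d (Suc n) \<Longrightarrow> finite (inedges d f n v)"
  by (simp add: inedges_eq)

lemma card_inedges: "v < d (Suc n) \<Longrightarrow> card (inedges d f n v) = (\<Sum>w<d n. f n v w)"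
  by (simp add: inedges_eq card_image card_SigmaI inj_on_def)

lemma orders_eq_permutations: "orders d f n v = permutations_of_set (inedges d f n v)"
  unfolding orders_def permutations_of_set_def inedges_def by auto

lemma inedges_nonempty: "bratteli d f \<Longrightarrow> v < d (Suc n) \<Longrightarrow> inedges d f n v \<noteq> {}"
proof -
  assume "bratteli d f" "v < d (Suc n)"
  then obtain w where "w < d n" "f n v w > 0" unfolding bratteli_def by blast
  hence "(w, v, 0) \<in> inedges d f n v" using \<open>v < d (Suc n)\<close> unfolding inedges_def is_edge_def erng_def by simp
  thus ?thesis by blast
qed

lemma orders_finite_nonempty: "bratteli d f \<Longrightarrow> v < d (Suc n) \<Longrightarrow> finite (orders d f n v) \<and> orders d f n v \<noteq> {}"
  by (simp add: orders_eq_permutations finite_inedges inedges_nonempty)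

definition valid :: "(nat \<Rightarrow> nat) \<Rightarrow> (nat \<Rightarrow> nat \<Rightarrow> nat \<Rightarrow> nat) \<Rightarrow> ((nat \<times> nat) \<Rightarrow> edge list) \<Rightarrow> bool" where
  "valid d f om \<longleftrightarrow> (\<forall>n v. v < d (Suc n) \<longrightarrow> om (n, v) \<in> orders d f n v)"

lemma AE_valid:
  assumes br: "bratteli d f"
  shows "AE om in ord_measure d f. valid d f om"
proof -
  have "AE om in ord_measure d f. v < d (Suc n) \<longrightarrow> om (n, v) \<in> orders d f n v" for n v
  proof (cases "v < d (Suc n)")
    case True
    have "AE om in PiM (ord_index d) (\<lambda>i. measure_pmf (ord_pmf d f i)). om (n, v) \<in> orders d f n v"
    proof (rule AE_PiM_component[where P="\<lambda>x. x \<in> orders d f n v"])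
      show "(n, v) \<in> ord_index d" using True by (simp add: ord_index_def)
      show "AE x in measure_pmf (ord_pmf d f (n, v)). x \<in> orders d f n v"
        using orders_finite_nonempty[OF br True] by (simp add: AE_measure_pmf_iff ord_pmf_def)
    qed (simp add: measure_pmf.prob_space_axioms)
    thus ?thesis unfolding ord_measure_eq by (rule eventually_mono) simp
  qed simp
  thus ?thesis unfolding valid_def by (simp add: AE_all_countable)
qed

section \<open>Maximal edges and maximal walks\<close>

definition max_src :: "((nat \<times> nat) \<Rightarrow> edge list) \<Rightarrow> nat \<Rightarrow> nat \<Rightarrow> nat" where
  "max_src om n v = fst (last (om (n, v)))"

definition max_ok :: "(nat \<Rightarrow> nat) \<Rightarrow> (nat \<Rightarrow> nat \<Rightarrow> nat \<Rightarrow> nat) \<Rightarrow> ((nat \<times> nat) \<Rightarrow> edge list) \<Rightarrow> nat \<Rightarrow> nat \<Rightarrow> bool" where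
  "max_ok d f om n v \<longleftrightarrow> is_edge d f n (last (om (n, v))) \<and> erng (last (om (n, v))) = v"

lemma max_ok_bound: "max_ok d f om n v \<Longrightarrow> v < d (Suc n) \<and> max_src om n v < d n"
  unfolding max_ok_def is_edge_def erng_def max_src_def by auto

lemma valid_max_ok:
  assumes br: "bratteli d f" and "valid d f om" and v: "v < d (Suc n)"
  shows "max_ok d f om n v"
proof -
  have xs: "om (n, v) \<in> orders d f n v" using assms unfolding valid_def by blast
  hence "om (n, v) \<noteq> []" using inedges_nonempty[OF br v] unfolding orders_def inedges_def by auto
  hence "last (om (n, v)) \<in> set (om (n, v))" by simp
  thus ?thesis using xs unfolding orders_def max_ok_def by auto
qed

fun max_walk :: "((nat \<times> nat) \<Rightarrow> edge list) \<Rightarrow> nat \<Rightarrow> nat \<Rightarrow> nat \<Rightarrow> nat" where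
  "max_walk om a 0 u = u"
| "max_walk om a (Suc k) u = max_walk om a k (max_src om (a + k) u)"

fun max_alive :: "(nat \<Rightarrow> nat) \<Rightarrow> (nat \<Rightarrow> nat \<Rightarrow> nat \<Rightarrow> nat) \<Rightarrow> ((nat \<times> nat) \<Rightarrow> edge list) \<Rightarrow> nat \<Rightarrow> nat \<Rightarrow> nat \<Rightarrow> bool" where
  "max_alive d f om a 0 u = True"
| "max_alive d f om a (Suc k) u = (max_ok d f om (a + k) u \<and> max_alive d f om a k (max_src om (a + k) u))"

lemma max_walk_add: "max_walk om a (i + j) u = max_walk om a i (max_walk om (a + i) j u)"
  by (induction j arbitrary: u) (simp_all add: add.assoc)

lemma max_alive_add:
  "max_alive d f om a (i + j) u = (max_alive d f om (a + i) j u \<and> max_alive d f om a i (max_walk om (a + i) j u))"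
  by (induction j arbitrary: u) (auto simp: add.assoc)

lemma max_walk_Suc': "max_walk om a (Suc k) u = max_src om a (max_walk om (Suc a) k u)"
  using max_walk_add[of om a 1 k u] by simp

lemma max_alive_Suc':
  "max_alive d f om a (Suc k) u = (max_alive d f om (Suc a) k u \<and> max_ok d f om a (max_walk om (Suc a) k u))"
  using max_alive_add[of d f om a 1 k u] by auto

lemma max_walk_cong:
  "(\<And>m u. a \<le> m \<Longrightarrow> m < a + k \<Longrightarrow> om (m, u) = om' (m, u)) \<Longrightarrow> max_walk om a k v = max_walk om' a k v"
  by (induction k arbitrary: v) (simp_all add: max_src_def)

lemma max_alive_cong:
  "(\<And>m u. a \<le> m \<Longrightarrow> m < a + k \<Longrightarrow> om (m, u) = om' (m, u)) \<Longrightarrow> max_alive d f om a k v = max_alive d f om' a k v"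
  by (induction k arbitrary: v) (simp_all add: max_src_def max_ok_def)

lemma valid_max_alive:
  assumes br: "bratteli d f" and va: "valid d f om"
  shows "v < d (a + k) \<Longrightarrow> max_alive d f om a k v \<and> max_walk om a k v < d a"
proof (induction k arbitrary: v)
  case (Suc k)
  have ok: "max_ok d f om (a + k) v" using valid_max_ok[OF br va] Suc.prems by simp
  thus ?case using Suc.IH max_ok_bound[OF ok] by simp
qed simp

definition max_chain :: "(nat \<Rightarrow> nat) \<Rightarrow> (nat \<Rightarrow> nat \<Rightarrow> nat \<Rightarrow> nat) \<Rightarrow> ((nat \<times> nat) \<Rightarrow> edge list) \<Rightarrow> (nat \<Rightarrow> nat) \<Rightarrow> bool" where
  "max_chain d f om p \<longleftrightarrow> (\<forall>m. max_ok d f om m (p (Suc m)) \<and> max_src om m (p (Suc m)) = p m)"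

lemma max_chain_walk:
  "max_chain d f om p \<Longrightarrow> max_alive d f om m N (p (m + N)) \<and> max_walk om m N (p (m + N)) = p m"
  by (induction N) (auto simp: max_chain_def)

lemma max_path_chain:
  assumes "is_max_path d f om x"
  shows "max_chain d f om (\<lambda>m. esrc (x m))" and "\<And>m. x m = last (om (m, esrc (x (Suc m))))"
    and "\<And>m. esrc (x m) < d m"
proof -
  have p: "is_path d f x" and mx: "\<And>n. x n = last (om (n, erng (x n)))"
    using assms unfolding is_max_path_def by auto
  have r: "\<And>m. erng (x m) = esrc (x (Suc m))" and e: "\<And>m. is_edge d f m (x m)"
    using p unfolding is_path_def by auto
  show xm: "\<And>m. x m = last (om (m, esrc (x (Suc m))))" using mx r by metis
  show "\<And>m. esrc (x m) < d m" using e unfolding is_edge_def esrc_def by auto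
  show "max_chain d f om (\<lambda>m. esrc (x m))"
    unfolding max_chain_def max_ok_def max_src_def
  proof (intro allI conjI)
    fix m
    show "is_edge d f m (last (om (m, esrc (x (Suc m)))))" using xm[of m, symmetric] e[of m] by simp
    show "erng (last (om (m, esrc (x (Suc m))))) = esrc (x (Suc m))" using xm[of m, symmetric] r[of m] by simp
    show "fst (last (om (m, esrc (x (Suc m))))) = esrc (x m)" using xm[of m, symmetric] by (simp add: esrc_def)
  qed
qed

lemma max_chain_path:
  assumes br: "bratteli d f" and ch: "max_chain d f om p"
  shows "is_max_path d f om (\<lambda>m. last (om (m, p (Suc m))))"
proof -
  let ?x = "\<lambda>m. last (om (m, p (Suc m)))"
  have ok: "\<And>m. max_ok d f om m (p (Suc m))" and src: "\<And>m. max_src om m (p (Suc m)) = p m"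
    using ch unfolding max_chain_def by auto
  have "p 0 < d 0" using max_ok_bound[OF ok[of 0]] src[of 0] by simp
  hence "p 0 = 0" using br unfolding bratteli_def by simp
  hence "is_path d f ?x" using ok src[of 0] src[of "Suc _"]
    unfolding is_path_def max_ok_def max_src_def esrc_def by auto
  moreover have "\<And>n. ?x n = last (om (n, erng (?x n)))" using ok unfolding max_ok_def by simp
  ultimately show ?thesis unfolding is_max_path_def by simp
qed

lemma max_path_eqI:
  assumes "is_max_path d f om x" "is_max_path d f om y" "\<And>m. esrc (x m) = esrc (y m)"
  shows "x = y"
proof
  fix m
  show "x m = y m"
    using max_path_chain(2)[OF assms(1), of m] max_path_chain(2)[OF assms(2), of m] assms(3)[of "Suc m"] by simp
qed

text \<open>Finitely many candidates and a downward closed family of properties: some candidate has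
  all of them (the pigeonhole step of Koenig's lemma).\<close>
lemma finite_candidate_for_all:
  fixes \<Phi> :: "nat \<Rightarrow> 'a \<Rightarrow> bool"
  assumes "finite C" and ex: "\<And>N. \<exists>c\<in>C. \<Phi> N c" and down: "\<And>N N' c. \<Phi> N c \<Longrightarrow> N' \<le> N \<Longrightarrow> \<Phi> N' c"
  shows "\<exists>c\<in>C. \<forall>N. \<Phi> N c"
proof (rule ccontr)
  assume "\<not> ?thesis"
  then obtain Nf where Nf: "\<And>c. c \<in> C \<Longrightarrow> \<not> \<Phi> (Nf c) c" by metis
  obtain c where c: "c \<in> C" "\<Phi> (\<Sum>c\<in>C. Nf c) c" using ex by blast
  have "Nf c \<le> (\<Sum>c\<in>C. Nf c)" using c(1) \<open>finite C\<close> by (intro member_le_sum) auto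
  thus False using down[OF c(2)] Nf[OF c(1)] by blast
qed

definition extendable :: "(nat \<Rightarrow> nat) \<Rightarrow> (nat \<Rightarrow> nat \<Rightarrow> nat \<Rightarrow> nat) \<Rightarrow> ((nat \<times> nat) \<Rightarrow> edge list) \<Rightarrow> nat \<Rightarrow> nat \<Rightarrow> bool" where
  "extendable d f om n u \<longleftrightarrow> (\<forall>N. \<exists>v. max_alive d f om n N v \<and> max_walk om n N v = u)"

lemma extendable_step:
  assumes "extendable d f om m u"
  shows "\<exists>u'. extendable d f om (Suc m) u' \<and> max_ok d f om m u' \<and> max_src om m u' = u"
proof -
  define \<Phi> where "\<Phi> N c \<longleftrightarrow> max_ok d f om m c \<and> max_src om m c = u
     \<and> (\<exists>y. max_alive d f om (Suc m) N y \<and> max_walk om (Suc m) N y = c)" for N c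
  have "\<exists>c\<in>{..<d (Suc m)}. \<forall>N. \<Phi> N c"
  proof (rule finite_candidate_for_all)
    fix N
    obtain y where y: "max_alive d f om m (Suc N) y" "max_walk om m (Suc N) y = u"
      using assms unfolding extendable_def by blast
    let ?c = "max_walk om (Suc m) N y"
    have ok: "max_ok d f om m ?c" and al: "max_alive d f om (Suc m) N y" using y(1) max_alive_Suc' by auto
    moreover have "max_src om m ?c = u" using y(2) max_walk_Suc' by metis
    ultimately have "\<Phi> N ?c" unfolding \<Phi>_def by blast
    moreover have "?c < d (Suc m)" using max_ok_bound[OF ok] by simp
    ultimately show "\<exists>c\<in>{..<d (Suc m)}. \<Phi> N c" by blast
  next
    fix N N' c assume phi: "\<Phi> N c" and le: "N' \<le> N"
    obtain j where N: "N = N' + j" using le le_Suc_ex by blast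
    obtain y where y: "max_alive d f om (Suc m) N y" "max_walk om (Suc m) N y = c"
      using phi unfolding \<Phi>_def by blast
    let ?y = "max_walk om (Suc m + N') j y"
    have "max_alive d f om (Suc m) N' ?y" "max_walk om (Suc m) N' ?y = c"
      using y max_alive_add[of d f om "Suc m" N' j y] max_walk_add[of om "Suc m" N' j y] N by simp_all
    thus "\<Phi> N' c" using phi unfolding \<Phi>_def by blast
  qed simp
  thus ?thesis unfolding extendable_def \<Phi>_def by blast
qed

lemma max_path_through:
  assumes br: "bratteli d f" and al: "max_alive d f om 0 n0 u" and ex: "extendable d f om n0 u"
  shows "\<exists>x. is_max_path d f om x \<and> esrc (x n0) = u"
proof -
  define nxt where "nxt m v = (SOME v'. extendable d f om (Suc m) v' \<and> max_ok d f om m v' \<and> max_src om m v' = v)" for m v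
  have nxt: "extendable d f om (Suc m) (nxt m v) \<and> max_ok d f om m (nxt m v) \<and> max_src om m (nxt m v) = v"
    if "extendable d f om m v" for m v
    unfolding nxt_def using someI_ex[OF extendable_step[OF that]] .
  define up where "up = rec_nat u (\<lambda>j w. nxt (n0 + j) w)"
  have up0: "up 0 = u" and upS: "\<And>j. up (Suc j) = nxt (n0 + j) (up j)" unfolding up_def by simp_all
  have up_ext: "extendable d f om (n0 + j) (up j)" for j
    by (induction j) (simp_all add: up0 upS ex nxt)
  define p where "p m = (if m < n0 then max_walk om m (n0 - m) u else up (m - n0))" for m
  have "max_chain d f om p" unfolding max_chain_def
  proof
    fix m
    show "max_ok d f om m (p (Suc m)) \<and> max_src om m (p (Suc m)) = p m"
    proof (cases "m < n0")
      case True
      define j where "j = n0 - Suc m"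
      have n0: "n0 = Suc m + j" using True unfolding j_def by simp
      have pS: "p (Suc m) = max_walk om (Suc m) j u"
        unfolding p_def j_def using True by (cases "Suc m < n0") (simp_all add: up0)
      have pm: "p m = max_walk om m (Suc j) u" unfolding p_def using True n0 by simp
      have "max_alive d f om 0 (Suc m) (max_walk om (Suc m) j u)"
        using al max_alive_add[of d f om 0 "Suc m" j u] n0 by simp
      thus ?thesis using pS pm by (simp only: max_walk_Suc') simp
    next
      case False
      have "p (Suc m) = nxt m (p m)"
        unfolding p_def using False upS[of "m - n0"] by (simp add: Suc_diff_le)
      moreover have "extendable d f om m (p m)" using up_ext[of "m - n0"] False unfolding p_def by simp
      ultimately show ?thesis using nxt by simp
    qed
  qed
  hence "is_max_path d f om (\<lambda>m. last (om (m, p (Suc m))))" by (rule max_chain_path[OF br])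
  moreover have "esrc (last (om (n0, p (Suc n0)))) = u"
  proof -
    have "max_src om n0 (p (Suc n0)) = p n0" using \<open>max_chain d f om p\<close> unfolding max_chain_def by blast
    thus ?thesis unfolding p_def max_src_def esrc_def by (simp add: up0)
  qed
  ultimately show ?thesis by blast
qed

lemma max_path_vertex:
  assumes "is_max_path d f om x"
  shows "max_alive d f om 0 n (esrc (x n)) \<and> extendable d f om n (esrc (x n))"
proof -
  note walk = max_chain_walk[OF max_path_chain(1)[OF assms]]
  show ?thesis unfolding extendable_def using walk[of 0 n] walk[of n] by auto
qed

lemma valid_max_path_exists:
  assumes br: "bratteli d f" and va: "valid d f om"
  shows "\<exists>x. is_max_path d f om x"
proof -
  have "extendable d f om 0 0" unfolding extendable_def
  proof
    fix N
    have "0 < d N" "d 0 = 1" using br unfolding bratteli_def by (auto intro: Suc_le_lessD)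
    thus "\<exists>v. max_alive d f om 0 N v \<and> max_walk om 0 N v = 0"
      using valid_max_alive[OF br va, of 0 0 N] by auto
  qed
  thus ?thesis using max_path_through[OF br _ \<open>extendable d f om 0 0\<close>] by fastforce
qed


section \<open>Measurability of O_B(1)\<close>

definition levels :: "(nat \<Rightarrow> nat) \<Rightarrow> nat \<Rightarrow> nat \<Rightarrow> (nat \<times> nat) set" where
  "levels d a k = (SIGMA n:{a..<a+k}. {..<d (Suc n)})"

lemma finite_levels: "finite (levels d a k)"
  unfolding levels_def by auto

lemma levels_event:
  assumes dep: "\<And>h h'. (\<And>m u. a \<le> m \<Longrightarrow> m < a + k \<Longrightarrow> h (m, u) = h' (m, u)) \<Longrightarrow> P h = P h'"
  shows "{om \<in> space (ord_measure d f). P om} \<in> sets (ord_measure d f)"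
    and "emeasure (ord_measure d f) {om \<in> space (ord_measure d f). P om}
       = emeasure (measure_pmf (Pi_pmf (levels d a k) undefined (ord_pmf d f))) {h. P h}"
proof -
  have sub: "levels d a k \<subseteq> ord_index d" unfolding levels_def ord_index_def by auto
  have restr: "P om = P (restrict om (levels d a k))" if om: "om \<in> PiE (ord_index d) (\<lambda>_. UNIV)" for om
  proof (rule dep)
    fix m u assume "a \<le> m" "m < a + k"
    thus "om (m, u) = restrict om (levels d a k) (m, u)"
      using om by (cases "u < d (Suc m)") (auto simp: levels_def ord_index_def PiE_iff extensional_def)
  qed
  note event = finite_dim_event[where J="levels d a k" and I="ord_index d" and P=P and Q="ord_pmf d f", OF finite_levels sub restr]
  show "{om \<in> space (ord_measure d f). P om} \<in> sets (ord_measure d f)"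
    unfolding ord_measure_eq by (rule event(1))
  show "emeasure (ord_measure d f) {om \<in> space (ord_measure d f). P om}
       = emeasure (measure_pmf (Pi_pmf (levels d a k) undefined (ord_pmf d f))) {h. P h}"
    unfolding ord_measure_eq by (rule event(2))
qed

lemma pred_max_walk: "Measurable.pred (ord_measure d f) (\<lambda>om. max_walk om a k v = u)"
  unfolding pred_def
proof (rule levels_event(1)[where a=a and k=k])
  fix h h' :: "nat \<times> nat \<Rightarrow> edge list"
  assume "\<And>m u. a \<le> m \<Longrightarrow> m < a + k \<Longrightarrow> h (m, u) = h' (m, u)"
  hence "max_walk h a k v = max_walk h' a k v" by (rule max_walk_cong)
  thus "(max_walk h a k v = u) = (max_walk h' a k v = u)" by simp
qed

lemma pred_max_alive: "Measurable.pred (ord_measure d f) (\<lambda>om. max_alive d f om a k v)"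
  unfolding pred_def
proof (rule levels_event(1)[where a=a and k=k])
  fix h h' :: "nat \<times> nat \<Rightarrow> edge list"
  assume "\<And>m u. a \<le> m \<Longrightarrow> m < a + k \<Longrightarrow> h (m, u) = h' (m, u)"
  thus "max_alive d f h a k v = max_alive d f h' a k v" by (rule max_alive_cong)
qed

lemma pred_extendable: "Measurable.pred (ord_measure d f) (\<lambda>om. extendable d f om n u)"
  unfolding extendable_def using pred_max_walk pred_max_alive by measurable

text \<open>O_B(1) in terms of finitely determined events: the root is extendable, and at each level
  at most one reachable vertex is extendable.\<close>
lemma O_B1_eq:
  assumes br: "bratteli d f"
  shows "O_B1 d f = {om \<in> space (ord_measure d f). extendable d f om 0 0 \<and>
     (\<forall>n u u'. max_alive d f om 0 n u \<and> extendable d f om n u \<and> max_alive d f om 0 n u'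
        \<and> extendable d f om n u' \<longrightarrow> u = u')}"
proof -
  have "(\<exists>!x. is_max_path d f om x) \<longleftrightarrow> extendable d f om 0 0 \<and>
     (\<forall>n u u'. max_alive d f om 0 n u \<and> extendable d f om n u \<and> max_alive d f om 0 n u'
        \<and> extendable d f om n u' \<longrightarrow> u = u')" for om
  proof
    assume ex1: "\<exists>!x. is_max_path d f om x"
    then obtain x where x: "is_max_path d f om x" by blast
    have "esrc (x 0) = 0" using x unfolding is_max_path_def is_path_def by simp
    hence "extendable d f om 0 0" using max_path_vertex[OF x, of 0] by simp
    moreover have "u = u'" if al: "max_alive d f om 0 n u" and ex: "extendable d f om n u"
      and al': "max_alive d f om 0 n u'" and ex': "extendable d f om n u'" for n u u'
    proof -
      obtain y where y: "is_max_path d f om y" "esrc (y n) = u" using max_path_through[OF br al ex] by blast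
      obtain z where z: "is_max_path d f om z" "esrc (z n) = u'" using max_path_through[OF br al' ex'] by blast
      show "u = u'" using ex1 y z by blast
    qed
    ultimately show "extendable d f om 0 0 \<and> (\<forall>n u u'. max_alive d f om 0 n u \<and> extendable d f om n u
      \<and> max_alive d f om 0 n u' \<and> extendable d f om n u' \<longrightarrow> u = u')" by blast
  next
    assume "extendable d f om 0 0 \<and> (\<forall>n u u'. max_alive d f om 0 n u \<and> extendable d f om n u
      \<and> max_alive d f om 0 n u' \<and> extendable d f om n u' \<longrightarrow> u = u')"
    hence e0: "extendable d f om 0 0" and uniq: "\<And>n u u'. max_alive d f om 0 n u \<Longrightarrow> extendable d f om n u
      \<Longrightarrow> max_alive d f om 0 n u' \<Longrightarrow> extendable d f om n u' \<Longrightarrow> u = u'" by blast+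
    obtain x where x: "is_max_path d f om x" using max_path_through[OF br _ e0] by fastforce
    show "\<exists>!x. is_max_path d f om x"
    proof (rule ex1I[of "is_max_path d f om" x, OF x])
      fix y assume y: "is_max_path d f om y"
      show "y = x"
      proof (rule max_path_eqI[OF y x])
        fix m show "esrc (y m) = esrc (x m)"
          using uniq max_path_vertex[OF x, of m] max_path_vertex[OF y, of m] by blast
      qed
    qed
  qed
  thus ?thesis unfolding O_B1_def by blast
qed

lemma O_B1_measurable: "bratteli d f \<Longrightarrow> O_B1 d f \<in> sets (ord_measure d f)"
  unfolding O_B1_eq using pred_extendable pred_max_alive by measurable

definition collapse :: "(nat \<Rightarrow> nat) \<Rightarrow> (nat \<Rightarrow> nat) \<Rightarrow> (nat \<Rightarrow> nat) \<Rightarrow> nat \<Rightarrow> ((nat \<times> nat) \<Rightarrow> edge list) \<Rightarrow> bool" where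
  "collapse d nk wk k om \<longleftrightarrow> (\<forall>v<d (nk (Suc k)). max_walk om (nk k) (nk (Suc k) - nk k) v = wk k)"

lemma max_path_collapse:
  assumes lt: "nk k < nk (Suc k)" and z: "is_max_path d f om z" and C: "collapse d nk wk k om"
  shows "esrc (z (nk k)) = wk k"
proof -
  let ?l = "nk (Suc k) - nk k"
  have l: "nk k + ?l = nk (Suc k)" using lt by simp
  have "max_walk om (nk k) ?l (esrc (z (nk (Suc k)))) = esrc (z (nk k))"
    using max_chain_walk[OF max_path_chain(1)[OF z], of "nk k" ?l] unfolding l by blast
  moreover have "max_walk om (nk k) ?l (esrc (z (nk (Suc k)))) = wk k"
    using C max_path_chain(3)[OF z] unfolding collapse_def by blast
  ultimately show ?thesis by simp
qed

text \<open>If blocks collapse infinitely often, a valid ordering has exactly one maximal path: below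
  a collapsing block all maximal paths are determined by w_k.\<close>
lemma unique_max_path_if_collapse:
  assumes br: "bratteli d f" and sm: "strict_mono nk" and va: "valid d f om"
    and io: "\<And>j. \<exists>i. collapse d nk wk (j + i) om"
  shows "\<exists>!x. is_max_path d f om x"
proof -
  have vertex: "esrc (z m) = max_walk om m (nk (m + i) - m) (wk (m + i))"
    if z: "is_max_path d f om z" and C: "collapse d nk wk (m + i) om" for z m i
  proof -
    have "m \<le> nk (m + i)" using seq_suble[OF sm, of "m + i"] by simp
    hence "max_walk om m (nk (m + i) - m) (esrc (z (nk (m + i)))) = esrc (z m)"
      using max_chain_walk[OF max_path_chain(1)[OF z], of m "nk (m + i) - m"] by simp
    thus ?thesis using max_path_collapse[OF _ z C] sm by (simp add: strict_monoD)
  qed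
  obtain x where x: "is_max_path d f om x" using valid_max_path_exists[OF br va] by blast
  show ?thesis
  proof (rule ex1I[of "is_max_path d f om" x, OF x])
    fix y assume y: "is_max_path d f om y"
    show "y = x"
    proof (rule max_path_eqI[OF y x])
      fix m
      obtain i where "collapse d nk wk (m + i) om" using io by blast
      thus "esrc (y m) = esrc (x m)" using vertex[OF y] vertex[OF x] by simp
    qed
  qed
qed


section \<open>The law of the source of a maximal edge\<close>

lemma card_permutations_last:
  assumes "finite E" "e \<in> E"
  shows "card {xs \<in> permutations_of_set E. last xs = e} = fact (card E - 1)"
proof -
  have "{xs \<in> permutations_of_set E. last xs = e} = (\<lambda>ys. ys @ [e]) ` permutations_of_set (E - {e})"
  proof (rule set_eqI, rule iffI)
    fix xs assume xs: "xs \<in> {xs \<in> permutations_of_set E. last xs = e}"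
    hence ne: "xs \<noteq> []" using assms by (auto simp: permutations_of_set_def)
    have xe: "xs = butlast xs @ [e]" using xs ne by (metis (mono_tags, lifting) append_butlast_last_id mem_Collect_eq)
    have "distinct xs" "set xs = E" using xs by (auto simp: permutations_of_set_def)
    have d2: "distinct (butlast xs @ [e])" using xe \<open>distinct xs\<close> by metis
    have s2: "set (butlast xs @ [e]) = E" using xe \<open>set xs = E\<close> by metis
    have "distinct (butlast xs) \<and> set (butlast xs) = E - {e}" using d2 s2 by auto
    hence "butlast xs \<in> permutations_of_set (E - {e})" by (simp add: permutations_of_set_def)
    thus "xs \<in> (\<lambda>ys. ys @ [e]) ` permutations_of_set (E - {e})" using xe by blast
  next
    fix xs assume "xs \<in> (\<lambda>ys. ys @ [e]) ` permutations_of_set (E - {e})"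
    then obtain ys where ys: "ys \<in> permutations_of_set (E - {e})" "xs = ys @ [e]" by blast
    thus "xs \<in> {xs \<in> permutations_of_set E. last xs = e}" using assms(2)
      by (auto simp: permutations_of_set_def)
  qed
  moreover have "inj (\<lambda>ys::'a list. ys @ [e])" by (auto intro: injI)
  ultimately have "card {xs \<in> permutations_of_set E. last xs = e} = card (permutations_of_set (E - {e}))"
    by (simp add: card_image inj_on_def)
  also have "\<dots> = fact (card E - 1)" using assms by (simp add: card_Diff_singleton)
  finally show ?thesis .
qed

lemma card_permutations_last_in:
  assumes "finite E" "T \<subseteq> E"
  shows "card {xs \<in> permutations_of_set E. last xs \<in> T} = card T * fact (card E - 1)"
proof -
  have fT: "finite T" using assms finite_subset by blast
  have "{xs \<in> permutations_of_set E. last xs \<in> T} = (\<Union>e\<in>T. {xs \<in> permutations_of_set E. last xs = e})" by blast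
  moreover have "card (\<Union>e\<in>T. {xs \<in> permutations_of_set E. last xs = e}) = (\<Sum>e\<in>T. card {xs \<in> permutations_of_set E. last xs = e})"
    by (rule card_UN_disjoint[OF fT]) (simp, blast)
  ultimately have "card {xs \<in> permutations_of_set E. last xs \<in> T} = (\<Sum>e\<in>T. card {xs \<in> permutations_of_set E. last xs = e})"
    by simp
  also have "\<dots> = (\<Sum>e\<in>T. fact (card E - 1))" using assms by (intro sum.cong refl card_permutations_last) auto
  finally show ?thesis by simp
qed

lemma prob_max_src:
  assumes br: "bratteli d f" and v: "v < d (Suc n)" and u: "u < d n"
  shows "measure_pmf.prob (ord_pmf d f (n, v)) {xs. fst (last xs) = u} = stoch d f n v u"
proof -
  let ?E = "inedges d f n v"
  let ?T = "{e \<in> ?E. fst e = u}"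
  have fE: "finite ?E" and neE: "?E \<noteq> {}" using finite_inedges[where d=d and f=f and n=n and v=v, OF v] inedges_nonempty[OF br v] .
  have "?T = (\<lambda>i. (u,v,i)) ` {..<f n v u}" using u by (auto simp: inedges_eq[where d=d and f=f and n=n and v=v, OF v] image_iff)
  hence cT: "card ?T = f n v u" by (simp add: card_image inj_on_def)
  have "last xs \<in> ?E" if "xs \<in> permutations_of_set ?E" for xs
  proof -
    have "set xs = ?E" using that by (simp add: permutations_of_set_def)
    hence "xs \<noteq> []" using neE by auto
    thus ?thesis using \<open>set xs = ?E\<close> last_in_set by blast
  qed
  hence event: "orders d f n v \<inter> {xs. fst (last xs) = u} = {xs \<in> permutations_of_set ?E. last xs \<in> ?T}"
    unfolding orders_eq_permutations by blast
  have "card ?E > 0" using fE neE by (simp add: card_gt_0_iff)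
  then obtain m where m: "card ?E = Suc m" using gr0_implies_Suc by blast
  have "measure_pmf.prob (ord_pmf d f (n, v)) {xs. fst (last xs) = u}
      = real (card (orders d f n v \<inter> {xs. fst (last xs) = u})) / real (card (orders d f n v))"
    unfolding ord_pmf_def fst_conv snd_conv by (rule measure_pmf_of_set) (use orders_finite_nonempty[OF br v] in auto)
  also have "card (orders d f n v \<inter> {xs. fst (last xs) = u}) = card ?T * fact (card ?E - 1)"
    unfolding event by (rule card_permutations_last_in[OF fE]) blast
  also have "card (orders d f n v) = fact (card ?E)" by (simp add: orders_eq_permutations fE)
  also have "real (card ?T * fact (card ?E - 1)) / real (fact (card ?E)) = real (card ?T) / real (card ?E)"
    unfolding m fact_Suc diff_Suc_1 of_nat_mult of_nat_id by (rule mult_divide_mult_cancel_right) simp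
  also have "\<dots> = stoch d f n v u" unfolding stoch_def cT card_inedges[where d=d and f=f and n=n and v=v, OF v] by simp
  finally show ?thesis .
qed

lemma prob_max_src_all:
  assumes br: "bratteli d f" and S: "S \<subseteq> {..<d (Suc n)}" and tau: "\<And>v. v \<in> S \<Longrightarrow> \<tau> v < d n"
  shows "measure_pmf.prob (Pi_pmf (levels d n 1) undefined (ord_pmf d f)) {h. \<forall>v\<in>S. max_src h n v = \<tau> v}
       = (\<Prod>v\<in>S. stoch d f n v (\<tau> v))"
proof -
  have L: "levels d n 1 = (\<lambda>v. (n, v)) ` {..<d (Suc n)}" unfolding levels_def by auto
  define B where "B x = (if snd x \<in> S then {xs::edge list. fst (last xs) = \<tau> (snd x)} else UNIV)" for x :: "nat \<times> nat"
  have "{h. \<forall>v\<in>S. max_src h n v = \<tau> v} = Pi (levels d n 1) B"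
  proof (rule set_eqI)
    fix h :: "(nat \<times> nat) \<Rightarrow> edge list"
    show "h \<in> {h. \<forall>v\<in>S. max_src h n v = \<tau> v} \<longleftrightarrow> h \<in> Pi (levels d n 1) B"
      unfolding L B_def max_src_def using S by (auto simp: Pi_iff)
  qed
  hence "measure_pmf.prob (Pi_pmf (levels d n 1) undefined (ord_pmf d f)) {h. \<forall>v\<in>S. max_src h n v = \<tau> v}
      = (\<Prod>x\<in>levels d n 1. measure_pmf.prob (ord_pmf d f x) (B x))"
    by (simp add: measure_Pi_pmf_Pi finite_levels)
  also have "\<dots> = (\<Prod>v<d (Suc n). measure_pmf.prob (ord_pmf d f (n, v)) (B (n, v)))"
    unfolding L by (subst prod.reindex) (auto simp: inj_on_def)
  also have "\<dots> = (\<Prod>v<d (Suc n). if v \<in> S then stoch d f n v (\<tau> v) else 1)"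
    by (intro prod.cong refl) (auto simp: B_def prob_max_src[OF br _ tau])
  also have "\<dots> = (\<Prod>v\<in>S. stoch d f n v (\<tau> v))"
    using S by (subst prod.inter_restrict[symmetric]) (simp_all add: Int_absorb1)
  finally show ?thesis .
qed

lemma stoch_nonneg: "stoch d f n v u \<ge> 0"
  unfolding stoch_def by (simp add: sum_nonneg)

lemma stoch_row_sum:
  assumes "bratteli d f" "v < d (Suc n)"
  shows "(\<Sum>u<d n. stoch d f n v u) = 1"
proof -
  obtain w where w: "w < d n" "f n v w > 0" using assms unfolding bratteli_def by blast
  have "(\<Sum>u<d n. real (f n v u)) \<ge> real (f n v w)" using w(1) by (intro member_le_sum) auto
  hence "(\<Sum>u<d n. real (f n v u)) > 0" using w(2) by linarith
  thus ?thesis unfolding stoch_def by (simp add: sum_divide_distrib[symmetric])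
qed

lemma mprod_same: "mprod d f a a v w = (if v = w then 1 else 0)"
  by (cases a) simp_all

lemma mprod_step: "mprod d f a (Suc (a + k)) v w = (\<Sum>u<d (a + k). stoch d f (a + k) v u * mprod d f a (a + k) u w)"
  by simp

lemma mprod_bounds: "bratteli d f \<Longrightarrow> v < d b \<Longrightarrow> 0 \<le> mprod d f a b v w \<and> mprod d f a b v w \<le> 1"
proof (induction b arbitrary: v)
  case (Suc b)
  show ?case
  proof (cases "Suc b \<le> a")
    case False
    have eq: "mprod d f a (Suc b) v w = (\<Sum>u<d b. stoch d f b v u * mprod d f a b u w)" using False by simp
    have "(\<Sum>u<d b. stoch d f b v u * mprod d f a b u w) \<le> (\<Sum>u<d b. stoch d f b v u * 1)"
      using Suc.IH[OF Suc.prems(1)] by (intro sum_mono mult_left_mono) (auto simp: stoch_nonneg)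
    also have "\<dots> = 1" using stoch_row_sum[OF Suc.prems] by simp
    finally show ?thesis unfolding eq
      using Suc.IH[OF Suc.prems(1)] by (auto intro!: sum_nonneg mult_nonneg_nonneg simp: stoch_nonneg)
  qed simp
qed simp

lemma prod_comp_le_prod_image:
  fixes H :: "'b \<Rightarrow> real"
  assumes "finite S" "\<And>u. u \<in> \<tau> ` S \<Longrightarrow> 0 \<le> H u \<and> H u \<le> 1"
  shows "(\<Prod>v\<in>S. H (\<tau> v)) \<le> (\<Prod>u\<in>\<tau> ` S. H u)"
  using assms
proof (induction S rule: finite_induct)
  case (insert x S)
  have IH: "(\<Prod>v\<in>S. H (\<tau> v)) \<le> (\<Prod>u\<in>\<tau> ` S. H u)" using insert.IH insert.prems by auto
  have Hx: "0 \<le> H (\<tau> x)" "H (\<tau> x) \<le> 1" using insert.prems by auto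
  have nn: "0 \<le> (\<Prod>v\<in>S. H (\<tau> v))" using insert.prems by (intro prod_nonneg) auto
  have split: "(\<Prod>v\<in>insert x S. H (\<tau> v)) = H (\<tau> x) * (\<Prod>v\<in>S. H (\<tau> v))" using insert.hyps by simp
  show ?case
  proof (cases "\<tau> x \<in> \<tau> ` S")
    case True
    have "H (\<tau> x) * (\<Prod>v\<in>S. H (\<tau> v)) \<le> (\<Prod>v\<in>S. H (\<tau> v))" using Hx nn mult_left_le_one_le by blast
    thus ?thesis using IH True split by (simp add: insert_absorb)
  next
    case False
    have "H (\<tau> x) * (\<Prod>v\<in>S. H (\<tau> v)) \<le> H (\<tau> x) * (\<Prod>u\<in>\<tau> ` S. H u)" using Hx IH by (intro mult_left_mono) auto
    thus ?thesis using False insert.hyps split by simp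
  qed
qed simp

section \<open>Probability that a block of levels collapses\<close>

lemma Pi_pmf_levels_indep:
  assumes P: "\<And>h h'. (\<And>m u. a \<le> m \<Longrightarrow> m < a + k1 \<Longrightarrow> h (m,u) = h' (m,u)) \<Longrightarrow> P h = P h'"
    and R: "\<And>h h'. (\<And>m u. a + k1 \<le> m \<Longrightarrow> m < a + k1 + k2 \<Longrightarrow> h (m,u) = h' (m,u)) \<Longrightarrow> R h = R h'"
  shows "measure_pmf.prob (Pi_pmf (levels d a (k1 + k2)) undefined Q) {h. P h \<and> R h}
       = measure_pmf.prob (Pi_pmf (levels d a k1) undefined Q) {h. P h}
       * measure_pmf.prob (Pi_pmf (levels d (a + k1) k2) undefined Q) {h. R h}"
proof -
  have "levels d a (k1 + k2) = levels d a k1 \<union> levels d (a + k1) k2" unfolding levels_def by auto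
  moreover have "measure_pmf.prob (Pi_pmf (levels d a k1 \<union> levels d (a + k1) k2) undefined Q) {h. P h \<and> R h}
       = measure_pmf.prob (Pi_pmf (levels d a k1) undefined Q) {h. P h}
       * measure_pmf.prob (Pi_pmf (levels d (a + k1) k2) undefined Q) {h. R h}"
  proof (rule Pi_pmf_indep[OF finite_levels finite_levels])
    show "levels d a k1 \<inter> levels d (a + k1) k2 = {}" unfolding levels_def by auto
  next
    fix h h' :: "nat \<times> nat \<Rightarrow> 'a" assume "\<And>x. x \<notin> levels d (a + k1) k2 \<Longrightarrow> h x = h' x"
    thus "P h = P h'" by (intro P) (auto simp: levels_def)
  next
    fix h h' :: "nat \<times> nat \<Rightarrow> 'a" assume "\<And>x. x \<notin> levels d a k1 \<Longrightarrow> h x = h' x"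
    thus "R h = R h'" by (intro R) (auto simp: levels_def)
  qed
  ultimately show ?thesis by simp
qed

text \<open>One step down: the event that the maximal walks from \<tau> ` S \<subseteq> V_(a+k) end at w and the event
  that the maximal edges into the vertices v \<in> S \<subseteq> V_(a+k+1) have sources \<tau> v live on disjoint
  levels, so their joint probability factorizes.\<close>
lemma prob_walks_and_sources:
  assumes br: "bratteli d f" and S: "S \<subseteq> {..<d (Suc (a + k))}" and tS: "\<tau> ` S \<subseteq> {..<d (a + k)}"
  shows "measure_pmf.prob (Pi_pmf (levels d a (Suc k)) undefined (ord_pmf d f))
           {h. (\<forall>u\<in>\<tau> ` S. max_walk h a k u = w) \<and> (\<forall>v\<in>S. max_src h (a + k) v = \<tau> v)}
       = measure_pmf.prob (Pi_pmf (levels d a k) undefined (ord_pmf d f)) {h. \<forall>u\<in>\<tau> ` S. max_walk h a k u = w}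
         * (\<Prod>v\<in>S. stoch d f (a + k) v (\<tau> v))"
proof -
  have "measure_pmf.prob (Pi_pmf (levels d a (k + 1)) undefined (ord_pmf d f))
           {h. (\<forall>u\<in>\<tau> ` S. max_walk h a k u = w) \<and> (\<forall>v\<in>S. max_src h (a + k) v = \<tau> v)}
     = measure_pmf.prob (Pi_pmf (levels d a k) undefined (ord_pmf d f)) {h. \<forall>u\<in>\<tau> ` S. max_walk h a k u = w}
     * measure_pmf.prob (Pi_pmf (levels d (a + k) 1) undefined (ord_pmf d f)) {h. \<forall>v\<in>S. max_src h (a + k) v = \<tau> v}"
  proof (rule Pi_pmf_levels_indep)
    fix h h' :: "(nat \<times> nat) \<Rightarrow> edge list"
    assume "\<And>m u. a \<le> m \<Longrightarrow> m < a + k \<Longrightarrow> h (m, u) = h' (m, u)"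
    hence "\<And>u. max_walk h a k u = max_walk h' a k u" by (intro max_walk_cong) auto
    thus "(\<forall>u\<in>\<tau> ` S. max_walk h a k u = w) = (\<forall>u\<in>\<tau> ` S. max_walk h' a k u = w)" by simp
  next
    fix h h' :: "(nat \<times> nat) \<Rightarrow> edge list"
    assume "\<And>m u. a + k \<le> m \<Longrightarrow> m < a + k + 1 \<Longrightarrow> h (m, u) = h' (m, u)"
    hence "\<And>v. max_src h (a + k) v = max_src h' (a + k) v" unfolding max_src_def by simp
    thus "(\<forall>v\<in>S. max_src h (a + k) v = \<tau> v) = (\<forall>v\<in>S. max_src h' (a + k) v = \<tau> v)" by simp
  qed
  moreover have "measure_pmf.prob (Pi_pmf (levels d (a + k) 1) undefined (ord_pmf d f))
      {h. \<forall>v\<in>S. max_src h (a + k) v = \<tau> v} = (\<Prod>v\<in>S. stoch d f (a + k) v (\<tau> v))"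
    by (rule prob_max_src_all[OF br]) (use S tS in auto)
  ultimately show ?thesis by simp
qed

text \<open>Combined with the induction hypothesis for the walks from \<tau> ` S, this bounds the joint
  event below by the product of the one-step and the (a+k)-step matrix entries; merging repeated
  values of \<tau> only helps, since the entries lie in [0, 1].\<close>
lemma prob_walks_and_sources_ge:
  assumes br: "bratteli d f" and S: "S \<subseteq> {..<d (Suc (a + k))}" and tS: "\<tau> ` S \<subseteq> {..<d (a + k)}"
    and IH: "(\<Prod>u\<in>\<tau> ` S. mprod d f a (a + k) u w)
       \<le> measure_pmf.prob (Pi_pmf (levels d a k) undefined (ord_pmf d f)) {h. \<forall>u\<in>\<tau> ` S. max_walk h a k u = w}"
  shows "(\<Prod>v\<in>S. stoch d f (a + k) v (\<tau> v) * mprod d f a (a + k) (\<tau> v) w)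
    \<le> measure_pmf.prob (Pi_pmf (levels d a (Suc k)) undefined (ord_pmf d f))
           {h. (\<forall>u\<in>\<tau> ` S. max_walk h a k u = w) \<and> (\<forall>v\<in>S. max_src h (a + k) v = \<tau> v)}"
proof -
  let ?H = "\<lambda>u. mprod d f a (a + k) u w"
  have fS: "finite S" using S finite_subset by blast
  have H01: "\<And>u. u \<in> \<tau> ` S \<Longrightarrow> 0 \<le> ?H u \<and> ?H u \<le> 1" using tS mprod_bounds[OF br] by blast
  have "(\<Prod>v\<in>S. stoch d f (a + k) v (\<tau> v) * ?H (\<tau> v)) = (\<Prod>v\<in>S. ?H (\<tau> v)) * (\<Prod>v\<in>S. stoch d f (a + k) v (\<tau> v))"
    by (simp add: prod.distrib mult.commute)
  also have "\<dots> \<le> (\<Prod>u\<in>\<tau> ` S. ?H u) * (\<Prod>v\<in>S. stoch d f (a + k) v (\<tau> v))"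
    by (intro mult_right_mono prod_comp_le_prod_image fS H01) (simp_all add: prod_nonneg stoch_nonneg)
  also have "\<dots> \<le> measure_pmf.prob (Pi_pmf (levels d a k) undefined (ord_pmf d f)) {h. \<forall>u\<in>\<tau> ` S. max_walk h a k u = w}
     * (\<Prod>v\<in>S. stoch d f (a + k) v (\<tau> v))"
    by (intro mult_right_mono IH) (intro prod_nonneg, simp add: stoch_nonneg)
  also have "\<dots> = measure_pmf.prob (Pi_pmf (levels d a (Suc k)) undefined (ord_pmf d f))
           {h. (\<forall>u\<in>\<tau> ` S. max_walk h a k u = w) \<and> (\<forall>v\<in>S. max_src h (a + k) v = \<tau> v)}"
    by (rule prob_walks_and_sources[OF br S tS, symmetric])
  finally show ?thesis .
qed

text \<open>Induction on k:
  expanding the products of row sums of M_(a+k-1) splits the event according to the sources \<tau>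
  of the maximal edges into S.\<close>
lemma prob_walks_to_ge:
  assumes br: "bratteli d f"
  shows "S \<subseteq> {..<d (a + k)} \<Longrightarrow> (\<Prod>v\<in>S. mprod d f a (a + k) v w)
     \<le> measure_pmf.prob (Pi_pmf (levels d a k) undefined (ord_pmf d f)) {h. \<forall>v\<in>S. max_walk h a k v = w}"
proof (induction k arbitrary: S)
  case 0
  show ?case
  proof (cases "S \<subseteq> {w}")
    case True
    have "(\<Prod>v\<in>S. mprod d f a (a + 0) v w) = (\<Prod>v\<in>S. 1)"
      using True by (intro prod.cong refl) (auto simp: mprod_same)
    moreover have "{h. \<forall>v\<in>S. max_walk h a 0 v = w} = UNIV" using True by auto
    ultimately show ?thesis by simp
  next
    case False
    then obtain v where v: "v \<in> S" "v \<noteq> w" by blast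
    have "finite S" using 0 finite_subset by blast
    hence "(\<Prod>v\<in>S. mprod d f a (a + 0) v w) = 0" using v by (intro prod_zero) (auto simp: mprod_same)
    thus ?thesis by simp
  qed
next
  case (Suc k)
  have fS: "finite S" using Suc.prems finite_subset by blast
  let ?P = "Pi_pmf (levels d a (Suc k)) undefined (ord_pmf d f)"
  let ?H = "\<lambda>u. mprod d f a (a + k) u w"
  define T where "T = PiE S (\<lambda>_. {..<d (a + k)})"
  define given where "given \<tau> = {h. (\<forall>u\<in>\<tau> ` S. max_walk h a k u = w) \<and> (\<forall>v\<in>S. max_src h (a + k) v = \<tau> v)}"
    for \<tau> :: "nat \<Rightarrow> nat"
  have disj: "disjoint_family_on given T"
    unfolding disjoint_family_on_def
  proof (intro ballI impI)
    fix \<tau> \<tau>' assume t: "\<tau> \<in> T" "\<tau>' \<in> T" "\<tau> \<noteq> \<tau>'"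
    then obtain v where v: "v \<in> S" "\<tau> v \<noteq> \<tau>' v" unfolding T_def by (meson PiE_ext)
    show "given \<tau> \<inter> given \<tau>' = {}"
    proof (rule equals0I)
      fix h assume "h \<in> given \<tau> \<inter> given \<tau>'"
      hence "max_src h (a + k) v = \<tau> v" "max_src h (a + k) v = \<tau>' v" using v(1) unfolding given_def by blast+
      thus False using v(2) by simp
    qed
  qed
  have piece: "(\<Prod>v\<in>S. stoch d f (a + k) v (\<tau> v) * ?H (\<tau> v)) \<le> measure_pmf.prob ?P (given \<tau>)"
    if "\<tau> \<in> T" for \<tau>
  proof -
    have tS: "\<tau> ` S \<subseteq> {..<d (a + k)}" using that unfolding T_def by auto
    show ?thesis unfolding given_def
      by (rule prob_walks_and_sources_ge[OF br _ tS Suc.IH[OF tS]]) (use Suc.prems in simp)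
  qed
  have "(\<Prod>v\<in>S. mprod d f a (a + Suc k) v w) = (\<Prod>v\<in>S. \<Sum>u<d (a + k). stoch d f (a + k) v u * ?H u)"
    by (simp add: mprod_step del: mprod.simps)
  also have "\<dots> = (\<Sum>\<tau>\<in>T. \<Prod>v\<in>S. stoch d f (a + k) v (\<tau> v) * ?H (\<tau> v))"
    unfolding T_def by (rule prod_sum_PiE[OF fS]) simp
  also have "\<dots> \<le> (\<Sum>\<tau>\<in>T. measure_pmf.prob ?P (given \<tau>))" by (intro sum_mono piece)
  also have "\<dots> = measure_pmf.prob ?P (\<Union>\<tau>\<in>T. given \<tau>)"
    by (rule measure_pmf.finite_measure_finite_Union[symmetric, OF _ _ disj]) (simp_all add: T_def fS finite_PiE)
  also have "\<dots> \<le> measure_pmf.prob ?P {h. \<forall>v\<in>S. max_walk h a (Suc k) v = w}"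
    by (rule measure_pmf.finite_measure_mono) (auto simp: given_def)
  finally show ?case .
qed

lemma prob_collapse_ge:
  assumes br: "bratteli d f" and lt: "nk k < nk (Suc k)" and "0 \<le> \<epsilon>"
    and hyp: "\<And>v. v < d (nk (Suc k)) \<Longrightarrow> mprod d f (nk k) (nk (Suc k)) v (wk k) \<ge> \<epsilon>"
  shows "\<epsilon> ^ d (nk (Suc k))
    \<le> measure_pmf.prob (Pi_pmf (levels d (nk k) (nk (Suc k) - nk k)) undefined (ord_pmf d f)) {h. collapse d nk wk k h}"
proof -
  have s: "nk k + (nk (Suc k) - nk k) = nk (Suc k)" using lt by simp
  have "\<epsilon> ^ d (nk (Suc k)) \<le> (\<Prod>v\<in>{..<d (nk (Suc k))}. mprod d f (nk k) (nk (Suc k)) v (wk k))"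
    using hyp \<open>0 \<le> \<epsilon>\<close> prod_mono[of "{..<d (nk (Suc k))}" "\<lambda>_. \<epsilon>"] by simp
  also have "\<dots> \<le> measure_pmf.prob (Pi_pmf (levels d (nk k) (nk (Suc k) - nk k)) undefined (ord_pmf d f))
      {h. \<forall>v\<in>{..<d (nk (Suc k))}. max_walk h (nk k) (nk (Suc k) - nk k) v = wk k}"
    using prob_walks_to_ge[OF br, of "{..<d (nk (Suc k))}" "nk k" "nk (Suc k) - nk k" "wk k"] unfolding s by simp
  also have "\<dots> = measure_pmf.prob (Pi_pmf (levels d (nk k) (nk (Suc k) - nk k)) undefined (ord_pmf d f))
      {h. collapse d nk wk k h}"
    unfolding collapse_def by (simp only: Ball_def lessThan_iff)
  finally show ?thesis .
qed


section \<open>Almost surely infinitely many blocks collapse\<close>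

lemma collapse_cong:
  assumes sm: "strict_mono nk" and jk: "j \<le> k" "k < j + L"
    and eq: "\<And>m u. nk j \<le> m \<Longrightarrow> m < nk j + (nk (j + L) - nk j) \<Longrightarrow> h (m, u) = h' (m, u)"
  shows "collapse d nk wk k h = collapse d nk wk k h'"
proof -
  have "nk j \<le> nk k" "nk (Suc k) \<le> nk (j + L)" "nk k < nk (Suc k)"
    using strict_mono_leD[OF sm] jk sm by (auto simp: strict_monoD)
  hence "\<And>v. max_walk h (nk k) (nk (Suc k) - nk k) v = max_walk h' (nk k) (nk (Suc k) - nk k) v"
    by (intro max_walk_cong eq) auto
  thus ?thesis unfolding collapse_def by simp
qed

lemma prob_no_collapse_split:
  assumes sm: "strict_mono nk"
  shows "measure_pmf.prob (Pi_pmf (levels d (nk j) (nk (j + Suc L) - nk j)) undefined Q)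
           {h. \<forall>i<Suc L. \<not> collapse d nk wk (j + i) h}
       = measure_pmf.prob (Pi_pmf (levels d (nk j) (nk (j + L) - nk j)) undefined Q)
           {h. \<forall>i<L. \<not> collapse d nk wk (j + i) h}
       * measure_pmf.prob (Pi_pmf (levels d (nk (j + L)) (nk (Suc (j + L)) - nk (j + L))) undefined Q)
           {h. \<not> collapse d nk wk (j + L) h}"
proof -
  define k1 where "k1 = nk (j + L) - nk j"
  define k2 where "k2 = nk (Suc (j + L)) - nk (j + L)"
  have "nk j \<le> nk (j + L)" "nk (j + L) < nk (Suc (j + L))"
    using strict_mono_leD[OF sm] sm by (simp_all add: strict_monoD)
  hence s1: "nk (j + Suc L) - nk j = k1 + k2" and s2: "nk j + (nk (j + L) - nk j) = nk (j + L)"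
    unfolding k1_def k2_def by simp_all
  have split: "{h. \<forall>i<Suc L. \<not> collapse d nk wk (j + i) h}
      = {h. (\<forall>i<L. \<not> collapse d nk wk (j + i) h) \<and> \<not> collapse d nk wk (j + L) h}"
    by (auto simp: less_Suc_eq)
  have indep: "measure_pmf.prob (Pi_pmf (levels d (nk j) (k1 + k2)) undefined Q)
      {h. (\<forall>i<L. \<not> collapse d nk wk (j + i) h) \<and> \<not> collapse d nk wk (j + L) h}
    = measure_pmf.prob (Pi_pmf (levels d (nk j) k1) undefined Q) {h. \<forall>i<L. \<not> collapse d nk wk (j + i) h}
    * measure_pmf.prob (Pi_pmf (levels d (nk j + k1) k2) undefined Q) {h. \<not> collapse d nk wk (j + L) h}"
  proof (rule Pi_pmf_levels_indep)
    fix h h' :: "(nat \<times> nat) \<Rightarrow> edge list"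
    assume eq: "\<And>m u. nk j \<le> m \<Longrightarrow> m < nk j + k1 \<Longrightarrow> h (m, u) = h' (m, u)"
    have "collapse d nk wk (j + i) h = collapse d nk wk (j + i) h'" if "i < L" for i
      by (rule collapse_cong[OF sm, of j _ L]) (use that eq in \<open>auto simp: k1_def\<close>)
    thus "(\<forall>i<L. \<not> collapse d nk wk (j + i) h) = (\<forall>i<L. \<not> collapse d nk wk (j + i) h')" by simp
  next
    fix h h' :: "(nat \<times> nat) \<Rightarrow> edge list"
    assume eq: "\<And>m u. nk j + k1 \<le> m \<Longrightarrow> m < nk j + k1 + k2 \<Longrightarrow> h (m, u) = h' (m, u)"
    have "collapse d nk wk (j + L) h = collapse d nk wk (j + L) h'"
      by (rule collapse_cong[OF sm, of "j + L" _ 1]) (use eq s2 in \<open>auto simp: k1_def k2_def\<close>)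
    thus "(\<not> collapse d nk wk (j + L) h) = (\<not> collapse d nk wk (j + L) h')" by simp
  qed
  show ?thesis using indep unfolding s1 split by (simp only: k1_def k2_def s2)
qed

lemma prob_no_collapse_le:
  assumes sm: "strict_mono nk"
    and lb: "\<And>k. \<delta> \<le> measure_pmf.prob (Pi_pmf (levels d (nk k) (nk (Suc k) - nk k)) undefined Q) {h. collapse d nk wk k h}"
  shows "measure_pmf.prob (Pi_pmf (levels d (nk j) (nk (j + L) - nk j)) undefined Q)
           {h. \<forall>i<L. \<not> collapse d nk wk (j + i) h} \<le> (1 - \<delta>) ^ L"
proof (induction L)
  case (Suc L)
  have last: "measure_pmf.prob (Pi_pmf (levels d (nk (j + L)) (nk (Suc (j + L)) - nk (j + L))) undefined Q)
      {h. \<not> collapse d nk wk (j + L) h} \<le> 1 - \<delta>"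
    using lb[of "j + L"] measure_pmf.prob_compl[of "{h. collapse d nk wk (j + L) h}"]
    by (simp add: Compl_eq_Diff_UNIV[symmetric] Collect_neg_eq)
  have "\<delta> \<le> 1" using lb[of 0] measure_pmf.prob_le_1 order_trans by blast
  hence "measure_pmf.prob (Pi_pmf (levels d (nk j) (nk (j + Suc L) - nk j)) undefined Q)
           {h. \<forall>i<Suc L. \<not> collapse d nk wk (j + i) h} \<le> (1 - \<delta>) ^ L * (1 - \<delta>)"
    unfolding prob_no_collapse_split[OF sm] using Suc.IH last by (intro mult_mono) simp_all
  thus ?case by (simp add: mult.commute)
qed simp

lemma pred_collapse: "Measurable.pred (ord_measure d f) (collapse d nk wk k)"
  unfolding collapse_def using pred_max_walk by measurable

lemma measure_never_collapse_le:
  assumes sm: "strict_mono nk"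
    and lb: "\<And>k. \<delta> \<le> measure_pmf.prob (Pi_pmf (levels d (nk k) (nk (Suc k) - nk k)) undefined (ord_pmf d f))
                        {h. collapse d nk wk k h}"
  shows "measure (ord_measure d f) {om \<in> space (ord_measure d f). \<forall>i. \<not> collapse d nk wk (j + i) om}
    \<le> (1 - \<delta>) ^ L"
proof -
  let ?M = "ord_measure d f"
  interpret P: prob_space ?M by (rule prob_space_ord_measure)
  note event = levels_event[where a="nk j" and k="nk (j + L) - nk j" and d=d and f=f
      and P="\<lambda>om. \<forall>i<L. \<not> collapse d nk wk (j + i) om"]
  have dep: "(\<forall>i<L. \<not> collapse d nk wk (j + i) h) = (\<forall>i<L. \<not> collapse d nk wk (j + i) h')"
    if eq: "\<And>m u. nk j \<le> m \<Longrightarrow> m < nk j + (nk (j + L) - nk j) \<Longrightarrow> h (m, u) = h' (m, u)" for h h'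
  proof -
    have "collapse d nk wk (j + i) h = collapse d nk wk (j + i) h'" if "i < L" for i
      by (rule collapse_cong[OF sm, of j _ L]) (use that eq in auto)
    thus ?thesis by simp
  qed
  have "measure ?M {om \<in> space ?M. \<forall>i. \<not> collapse d nk wk (j + i) om}
      \<le> measure ?M {om \<in> space ?M. \<forall>i<L. \<not> collapse d nk wk (j + i) om}"
    by (rule P.finite_measure_mono[OF _ event(1)[OF dep]]) auto
  also have "\<dots> = measure_pmf.prob (Pi_pmf (levels d (nk j) (nk (j + L) - nk j)) undefined (ord_pmf d f))
      {h. \<forall>i<L. \<not> collapse d nk wk (j + i) h}"
    using event(2)[OF dep] by (simp add: P.emeasure_eq_measure measure_pmf.emeasure_eq_measure)
  also have "\<dots> \<le> (1 - \<delta>) ^ L" by (rule prob_no_collapse_le[OF sm lb])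
  finally show ?thesis .
qed

text \<open>Since (1 - \<delta>)^L \<rightarrow> 0, almost surely some block from block j on collapses, for every j.\<close>
lemma AE_collapse_infinitely_often:
  assumes sm: "strict_mono nk" and \<delta>: "\<delta> > 0"
    and lb: "\<And>k. \<delta> \<le> measure_pmf.prob (Pi_pmf (levels d (nk k) (nk (Suc k) - nk k)) undefined (ord_pmf d f))
                        {h. collapse d nk wk k h}"
  shows "AE om in ord_measure d f. \<forall>j. \<exists>i. collapse d nk wk (j + i) om"
proof -
  let ?M = "ord_measure d f"
  interpret P: prob_space ?M by (rule prob_space_ord_measure)
  have "\<delta> \<le> 1" using lb[of 0] measure_pmf.prob_le_1 order_trans by blast
  hence lim: "(\<lambda>L. (1 - \<delta>) ^ L) \<longlonglongrightarrow> 0" using \<delta> by (intro LIMSEQ_power_zero) simp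
  have "AE om in ?M. \<exists>i. collapse d nk wk (j + i) om" for j
  proof -
    let ?N = "{om \<in> space ?M. \<forall>i. \<not> collapse d nk wk (j + i) om}"
    have N: "?N \<in> sets ?M" using pred_collapse by measurable
    have "measure ?M ?N \<le> 0"
      using lim by (rule LIMSEQ_le_const) (use measure_never_collapse_le[OF sm lb] in blast)
    hence "emeasure ?M ?N = 0" using measure_nonneg[of ?M ?N] by (simp add: P.emeasure_eq_measure)
    thus ?thesis by (subst AE_iff_measurable[OF N]) simp_all
  qed
  thus ?thesis by (simp add: AE_all_countable)
qed

theorem mainTheorem19:
  fixes d :: "nat \<Rightarrow> nat" and f :: "nat \<Rightarrow> nat \<Rightarrow> nat \<Rightarrow> nat"
    and \<epsilon> :: real and nk :: "nat \<Rightarrow> nat" and wk :: "nat \<Rightarrow> nat"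
  assumes "bratteli d f" and "aperiodic d f" and "finite_rank d"
    and "\<epsilon> > 0" and "strict_mono nk"
    and "\<And>k. wk k < d (nk k)"
    and "\<And>k v. v < d (nk (Suc k)) \<Longrightarrow> mprod d f (nk k) (nk (Suc k)) v (wk k) \<ge> \<epsilon>"
  shows "emeasure (ord_measure d f) (O_B1 d f) = 1"
proof -
  note br = assms(1) and sm = assms(5) and col = assms(7)
  obtain K where K: "\<And>n. d n \<le> K" using assms(3) unfolding finite_rank_def by blast
  have d_pos: "0 < d n" for n using br unfolding bratteli_def by (simp add: Suc_le_eq)
  \<comment> \<open>\<epsilon> is bounded by an entry of a stochastic matrix\<close>
  have "\<epsilon> \<le> 1"
    using col[of 0 0, OF d_pos] mprod_bounds[where b="nk (Suc 0)" and v=0 and a="nk 0" and w="wk 0", OF br d_pos]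
    by linarith
  have lb: "\<epsilon> ^ K \<le> measure_pmf.prob (Pi_pmf (levels d (nk k) (nk (Suc k) - nk k)) undefined (ord_pmf d f))
                       {h. collapse d nk wk k h}" for k
  proof -
    have "\<epsilon> ^ K \<le> \<epsilon> ^ d (nk (Suc k))" using K \<open>\<epsilon> \<le> 1\<close> assms(4) by (intro power_decreasing) auto
    also have "\<dots> \<le> measure_pmf.prob (Pi_pmf (levels d (nk k) (nk (Suc k) - nk k)) undefined (ord_pmf d f))
                       {h. collapse d nk wk k h}"
      by (rule prob_collapse_ge[OF br]) (use sm assms(4) col in \<open>auto simp: strict_monoD\<close>)
    finally show ?thesis .
  qed
  have "0 < \<epsilon> ^ K" using assms(4) by simp
  have "AE om in ord_measure d f. om \<in> O_B1 d f"
    using AE_valid[OF br] AE_collapse_infinitely_often[OF sm \<open>0 < \<epsilon> ^ K\<close> lb] AE_space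
  proof eventually_elim
    case (elim om)
    thus ?case using unique_max_path_if_collapse[OF br sm] unfolding O_B1_def by blast
  qed
  thus ?thesis by (rule prob_space.emeasure_eq_1_AE[OF prob_space_ord_measure O_B1_measurable[OF br]])
qed

end
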